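(* Let $X$ be a real Hilbert space and $Y$ a real Banach space. Let $F\colon X\to Y$ be a continuous function and let $L>0$, and suppose that for every $n\ge 1$, all $x_1,\ldots,x_n \in X$ and all $\lambda_1,\ldots,\lambda_n \ge 0$ with $\sum_{i=1}^n \lambda_i = 1$, $$\Big\| F\Big(\sum_{i=1}^n \lambda_i x_i\Big) - \sum_{i=1}^n \lambda_i F(x_i)\Big\| \le \frac{L}{2}\sum_{1\le i<j\le n} \lambda_i\lambda_j \|x_i - x_j\|^2.$$ For each $y^*\in Y^*$ define $\phi_{y^*}\colon X\to\mathbb{R}$ by $\phi_{y^*}(x) = y^*(F(x))$. Then for each $y^*\in Y^*$ with $\|y^*\|\le 1$, the function $\phi_{y^*}$ is Fréchet differentiable everywhere on $X$ and its gradient $\nabla\phi_{y^*}\colon X\to X$ is $L$-Lipschitz continuous.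
   Context: $Y^*$ denotes the (continuous) dual space of $Y$ with the dual norm. The gradient $\nabla\phi_{y^*}(x)\in X$ is the Riesz representative of the Fréchet derivative of $\phi_{y^*}$ at $x$. *)

theory Defs
  imports "HOL-Analysis.Analysis"
begin

end

theory Submission
  imports Defs
begin

text \<open>
  Taking two points in the hypothesis shows that \<open>F\<close>, and hence \<open>\<phi> = y\<^sup>* \<circ> F\<close> for
  \<open>\<parallel>y\<^sup>*\<parallel> \<le> 1\<close>, is affine up to the error \<open>L/2 \<mu>(1-\<mu>)\<parallel>a - b\<parallel>\<^sup>2\<close>. Along every ray the
  difference quotients \<open>(\<phi>(x + t h) - \<phi> x) / t\<close> are then Lipschitz in \<open>t\<close> with constant
  \<open>L/2 \<parallel>h\<parallel>\<^sup>2\<close>, so they converge as \<open>t \<rightarrow> 0\<close>, with error \<open>L/2 \<parallel>h\<parallel>\<^sup>2 t\<close>. The limit is additive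
  (compare the quotients at \<open>h\<close>, \<open>k\<close> and \<open>h + k\<close> through the midpoint estimate) and
  positively homogeneous, and it is bounded because \<open>\<phi>\<close> is continuous; by the Riesz
  representation theorem it is \<open>h \<mapsto> \<nabla>\<phi>(x) \<bullet> h\<close>, and
  \<open>\<bar>\<phi>(x + h) - \<phi> x - \<nabla>\<phi>(x) \<bullet> h\<bar> \<le> L/2 \<parallel>h\<parallel>\<^sup>2\<close>. This bound makes \<open>\<phi>\<close> Frechet differentiable,
  and it makes \<open>\<phi> + L/2 \<parallel>\<cdot>\<parallel>\<^sup>2\<close> convex and \<open>2L\<close>-smooth; the co-coercivity of gradients of such
  functions yields that \<open>\<nabla>\<phi>\<close> is \<open>L\<close>-Lipschitz.
\<close>

definition approx_affine :: "real \<Rightarrow> ('a::real_normed_vector \<Rightarrow> 'b::real_normed_vector) \<Rightarrow> bool" where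
  "approx_affine L f \<longleftrightarrow> (\<forall>a b \<mu>. 0 \<le> \<mu> \<longrightarrow> \<mu> \<le> 1 \<longrightarrow>
     norm (f (\<mu> *\<^sub>R a + (1 - \<mu>) *\<^sub>R b) - (\<mu> *\<^sub>R f a + (1 - \<mu>) *\<^sub>R f b))
       \<le> L / 2 * (\<mu> * (1 - \<mu>) * (norm (a - b))\<^sup>2))"

lemma approx_affineD:
  assumes "approx_affine L f" "0 \<le> \<mu>" "\<mu> \<le> 1"
  shows "norm (f (\<mu> *\<^sub>R a + (1 - \<mu>) *\<^sub>R b) - (\<mu> *\<^sub>R f a + (1 - \<mu>) *\<^sub>R f b))
           \<le> L / 2 * (\<mu> * (1 - \<mu>) * (norm (a - b))\<^sup>2)"
  using assms unfolding approx_affine_def by blast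

lemma approx_affine_blinfun_compose:
  assumes "approx_affine L f" "norm T \<le> 1"
  shows "approx_affine L (\<lambda>x. blinfun_apply T (f x))"
  unfolding approx_affine_def
proof (intro allI impI)
  fix a b and \<mu> :: real assume \<mu>: "0 \<le> \<mu>" "\<mu> \<le> 1"
  let ?e = "f (\<mu> *\<^sub>R a + (1 - \<mu>) *\<^sub>R b) - (\<mu> *\<^sub>R f a + (1 - \<mu>) *\<^sub>R f b)"
  have "norm (T ?e) \<le> norm T * norm ?e" by (rule norm_blinfun)
  also have "\<dots> \<le> norm ?e" using assms(2) by (simp add: mult_left_le_one_le)
  also have "\<dots> \<le> L / 2 * (\<mu> * (1 - \<mu>) * (norm (a - b))\<^sup>2)" using approx_affineD[OF assms(1) \<mu>] .
  finally show "norm (T (f (\<mu> *\<^sub>R a + (1 - \<mu>) *\<^sub>R b)) - (\<mu> *\<^sub>R T (f a) + (1 - \<mu>) *\<^sub>R T (f b)))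
      \<le> L / 2 * (\<mu> * (1 - \<mu>) * (norm (a - b))\<^sup>2)"
    by (simp add: blinfun.bilinear_simps)
qed

lemma approx_affine_if_convex_combination_bound:
  fixes F :: "'a::real_normed_vector \<Rightarrow> 'b::real_normed_vector"
  assumes "\<And>(n::nat) (x::nat \<Rightarrow> 'a) (lam::nat \<Rightarrow> real).
        n \<ge> 1 \<Longrightarrow> (\<forall>i\<in>{1..n}. lam i \<ge> 0) \<Longrightarrow> (\<Sum>i=1..n. lam i) = 1 \<Longrightarrow>
        norm (F (\<Sum>i=1..n. lam i *\<^sub>R x i) - (\<Sum>i=1..n. lam i *\<^sub>R F (x i)))
          \<le> L / 2 * (\<Sum>i=1..n. \<Sum>j\<in>{i<..n}. lam i * lam j * (norm (x i - x j))\<^sup>2)"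
  shows "approx_affine L F"
  unfolding approx_affine_def
proof (intro allI impI)
  fix a b and \<mu> :: real assume "0 \<le> \<mu>" "\<mu> \<le> 1"
  moreover have "{1..2::nat} = {1, 2}" "{1<..2::nat} = {2}" "{2<..2::nat} = {}"
    by auto
  ultimately show "norm (F (\<mu> *\<^sub>R a + (1 - \<mu>) *\<^sub>R b) - (\<mu> *\<^sub>R F a + (1 - \<mu>) *\<^sub>R F b))
      \<le> L / 2 * (\<mu> * (1 - \<mu>) * (norm (a - b))\<^sup>2)"
    using assms[of 2 "\<lambda>i. if i = 1 then \<mu> else 1 - \<mu>" "\<lambda>i. if i = 1 then a else b"] by simp
qed

definition diff_quotient :: "('a::real_normed_vector \<Rightarrow> 'b::real_normed_vector) \<Rightarrow> 'a \<Rightarrow> 'a \<Rightarrow> real \<Rightarrow> 'b" where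
  "diff_quotient f x h t = (f (x + t *\<^sub>R h) - f x) /\<^sub>R t"

lemma approx_affine_diff_quotient_lipschitz:
  assumes "approx_affine L f" "0 \<le> L"
  shows "(L / 2 * (norm h)\<^sup>2)-lipschitz_on {0<..} (diff_quotient f x h)"
proof -
  have le: "dist (diff_quotient f x h s) (diff_quotient f x h t) \<le> L / 2 * (norm h)\<^sup>2 * (t - s)"
    if st: "0 < s" "s \<le> t" for s t
  proof -
    define \<mu> where "\<mu> = s / t"
    have \<mu>: "0 \<le> \<mu>" "\<mu> \<le> 1" "\<mu> * t = s" using st by (auto simp: \<mu>_def)
    let ?e = "f (x + s *\<^sub>R h) - (\<mu> *\<^sub>R f (x + t *\<^sub>R h) + (1 - \<mu>) *\<^sub>R f x)"
    have "\<mu> *\<^sub>R (x + t *\<^sub>R h) + (1 - \<mu>) *\<^sub>R x = x + s *\<^sub>R h"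
      using \<mu>(3) by (simp add: algebra_simps)
    then have "norm ?e \<le> L / 2 * (\<mu> * (1 - \<mu>) * (norm (t *\<^sub>R h))\<^sup>2)"
      using approx_affineD[OF assms(1) \<mu>(1,2), of "x + t *\<^sub>R h" x] by simp
    also have "\<dots> = s * (L / 2 * (norm h)\<^sup>2 * (t - s))"
      using st by (simp add: \<mu>_def power2_eq_square field_simps)
    finally have "norm ?e \<le> s * (L / 2 * (norm h)\<^sup>2 * (t - s))" .
    moreover have "?e = s *\<^sub>R (diff_quotient f x h s - diff_quotient f x h t)"
      using st by (simp add: diff_quotient_def \<mu>_def divide_inverse algebra_simps)
    ultimately show ?thesis
      using st by (simp add: dist_norm mult_le_cancel_left_pos)
  qed
  show ?thesis
  proof (rule lipschitz_onI)
    fix s t :: real assume "s \<in> {0<..}" "t \<in> {0<..}"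
    then show "dist (diff_quotient f x h s) (diff_quotient f x h t) \<le> L / 2 * (norm h)\<^sup>2 * dist s t"
      using le[of s t] le[of t s] by (cases "s \<le> t") (auto simp: dist_real_def dist_commute)
  qed (use assms(2) in simp)
qed

lemma lipschitz_on_pos_reals_limit_at_0:
  fixes q :: "real \<Rightarrow> 'b::complete_space"
  assumes "C-lipschitz_on {0<..} q"
  obtains l where "\<And>t. 0 < t \<Longrightarrow> dist l (q t) \<le> C * t"
proof -
  define s :: "nat \<Rightarrow> real" where "s n = inverse (real (Suc n))" for n
  have s: "s \<longlonglongrightarrow> 0" "\<And>n. s n \<in> {0<..}"
    unfolding s_def by (rule LIMSEQ_inverse_real_of_nat) simp
  have "Cauchy (\<lambda>n. q (s n))"
    using lipschitz_on_uniformly_continuous[OF assms] LIMSEQ_imp_Cauchy[OF s(1)] s(2)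
    by (rule uniformly_continuous_on_Cauchy)
  then obtain l where l: "(\<lambda>n. q (s n)) \<longlonglongrightarrow> l"
    by (auto simp: Cauchy_convergent_iff convergent_def)
  show thesis
  proof (rule that)
    fix t :: real assume "0 < t"
    have "(\<lambda>n. dist (q (s n)) (q t)) \<longlonglongrightarrow> dist l (q t)"
      by (intro tendsto_intros l)
    moreover have "(\<lambda>n. C * dist (s n) t) \<longlonglongrightarrow> C * dist 0 t"
      by (intro tendsto_intros s(1))
    moreover have "dist (q (s n)) (q t) \<le> C * dist (s n) t" for n
      using assms s(2) \<open>0 < t\<close> by (intro lipschitz_onD) auto
    ultimately have "dist l (q t) \<le> C * dist 0 t"
      by (intro LIMSEQ_le) auto
    then show "dist l (q t) \<le> C * t"
      using \<open>0 < t\<close> by (simp add: dist_real_def)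
  qed
qed

lemma approx_affine_diff_quotient_limits:
  fixes f :: "'a::real_normed_vector \<Rightarrow> 'b::banach"
  assumes "approx_affine L f" "0 \<le> L"
  obtains D where "\<And>h t. 0 < t \<Longrightarrow> norm (D h - diff_quotient f x h t) \<le> L / 2 * (norm h)\<^sup>2 * t"
proof -
  have "\<exists>l. \<forall>t>0. dist l (diff_quotient f x h t) \<le> L / 2 * (norm h)\<^sup>2 * t" for h
    by (metis lipschitz_on_pos_reals_limit_at_0 approx_affine_diff_quotient_lipschitz assms)
  then obtain D where "\<And>h t. 0 < t \<Longrightarrow> dist (D h) (diff_quotient f x h t) \<le> L / 2 * (norm h)\<^sup>2 * t"
    by metis
  then show thesis by (intro that) (simp add: dist_norm)
qed

lemma zero_if_norm_le_linear:
  fixes a :: "'a::real_normed_vector"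
  assumes "\<And>t. 0 < t \<Longrightarrow> norm a \<le> K * t"
  shows "a = 0"
proof -
  have "((\<lambda>t. K * t) \<longlongrightarrow> K * 0) (at_right 0)"
    by (intro tendsto_intros)
  moreover have "\<forall>\<^sub>F t in at_right 0. norm a \<le> K * t"
    using assms by (intro eventually_at_rightI[of 0 1]) auto
  ultimately have "norm a \<le> K * 0"
    by (intro tendsto_le[OF trivial_limit_at_right_real _ tendsto_const])
  then show ?thesis by simp
qed

lemma diff_quotient_limit_pos_homogeneous:
  assumes D: "\<And>h t. 0 < t \<Longrightarrow> norm (D h - diff_quotient f x h t) \<le> C * (norm h)\<^sup>2 * t"
    and "0 < c"
  shows "D (c *\<^sub>R h) = c *\<^sub>R D h"
proof -
  have "norm (D (c *\<^sub>R h) - c *\<^sub>R D h) \<le> (2 * C * c\<^sup>2 * (norm h)\<^sup>2) * t" if "0 < t" for t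
  proof -
    have "diff_quotient f x (c *\<^sub>R h) t = c *\<^sub>R diff_quotient f x h (c * t)"
      using \<open>0 < c\<close> \<open>0 < t\<close> by (simp add: diff_quotient_def mult.commute)
    then have "D (c *\<^sub>R h) - c *\<^sub>R D h
        = (D (c *\<^sub>R h) - diff_quotient f x (c *\<^sub>R h) t) - c *\<^sub>R (D h - diff_quotient f x h (c * t))"
      by (simp add: algebra_simps)
    then have "norm (D (c *\<^sub>R h) - c *\<^sub>R D h)
        \<le> norm (D (c *\<^sub>R h) - diff_quotient f x (c *\<^sub>R h) t) + c * norm (D h - diff_quotient f x h (c * t))"
      using \<open>0 < c\<close> by (metis norm_triangle_ineq4 norm_scaleR abs_of_pos)
    also have "\<dots> \<le> C * (norm (c *\<^sub>R h))\<^sup>2 * t + c * (C * (norm h)\<^sup>2 * (c * t))"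
      using D[of t "c *\<^sub>R h"] D[of "c * t" h] \<open>0 < c\<close> \<open>0 < t\<close>
      by (intro add_mono mult_left_mono) auto
    also have "\<dots> = (2 * C * c\<^sup>2 * (norm h)\<^sup>2) * t"
      using \<open>0 < c\<close> by (simp add: power_mult_distrib power2_eq_square)
    finally show ?thesis .
  qed
  then have "D (c *\<^sub>R h) - c *\<^sub>R D h = 0"
    by (rule zero_if_norm_le_linear)
  then show ?thesis
    by simp
qed

lemma approx_affine_diff_quotient_midpoint:
  assumes "approx_affine L f" "0 < t"
  shows "norm (diff_quotient f x (h + k) t - diff_quotient f x h (2 * t) - diff_quotient f x k (2 * t))
           \<le> L / 2 * (norm (h - k))\<^sup>2 * t"
proof -
  define a b where "a = x + (2 * t) *\<^sub>R h" and "b = x + (2 * t) *\<^sub>R k"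
  define M where "M = f (x + t *\<^sub>R (h + k)) - ((1/2) *\<^sub>R f a + (1 - 1/2) *\<^sub>R f b)"
  have "(1/2) *\<^sub>R a + (1 - 1/2) *\<^sub>R b = x + t *\<^sub>R (h + k)"
    unfolding a_def b_def by (simp add: algebra_simps flip: scaleR_add_left)
  moreover have "a - b = (2 * t) *\<^sub>R (h - k)"
    unfolding a_def b_def by (simp add: algebra_simps)
  ultimately have "norm M \<le> L / 2 * (norm (h - k))\<^sup>2 * t * t"
    using approx_affineD[OF assms(1), of "1/2" a b] \<open>0 < t\<close> unfolding M_def
    by (simp add: power_mult_distrib power2_eq_square mult_ac)
  moreover have "norm (M /\<^sub>R t) = norm M / t"
    using \<open>0 < t\<close> by (simp add: divide_inverse_commute)
  ultimately have "norm (M /\<^sub>R t) \<le> L / 2 * (norm (h - k))\<^sup>2 * t"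
    using \<open>0 < t\<close> by (simp add: pos_divide_le_eq)
  moreover have "(c - z) /\<^sub>R t - (a - z) /\<^sub>R (2 * t) - (b - z) /\<^sub>R (2 * t)
      = (c - ((1/2) *\<^sub>R a + (1 - 1/2) *\<^sub>R b)) /\<^sub>R t" for a b c z :: 'b
    by (simp add: algebra_simps scaleR_2[symmetric] flip: scaleR_add_right)
  then have "diff_quotient f x (h + k) t - diff_quotient f x h (2 * t) - diff_quotient f x k (2 * t)
      = M /\<^sub>R t"
    unfolding diff_quotient_def M_def a_def b_def .
  ultimately show ?thesis
    by simp
qed

lemma approx_affine_diff_quotient_limit_additive:
  assumes "approx_affine L f"
    and D: "\<And>h t. 0 < t \<Longrightarrow> norm (D h - diff_quotient f x h t) \<le> L / 2 * (norm h)\<^sup>2 * t"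
  shows "D (h + k) = D h + D k"
proof -
  have "norm (D (h + k) - D h - D k)
      \<le> (L / 2 * ((norm (h + k))\<^sup>2 + (norm (h - k))\<^sup>2) + L * ((norm h)\<^sup>2 + (norm k)\<^sup>2)) * t"
    if "0 < t" for t
  proof -
    have triangle: "norm (A - B - C + E) \<le> norm A + norm B + norm C + norm E" for A B C E :: 'b
      by (smt (verit) norm_triangle_ineq norm_triangle_ineq4)
    let ?A = "D (h + k) - diff_quotient f x (h + k) t"
      and ?B = "D h - diff_quotient f x h (2 * t)" and ?C = "D k - diff_quotient f x k (2 * t)"
      and ?E = "diff_quotient f x (h + k) t - diff_quotient f x h (2 * t) - diff_quotient f x k (2 * t)"
    have "norm (D (h + k) - D h - D k) = norm (?A - ?B - ?C + ?E)"
      by (simp add: algebra_simps)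
    also have "\<dots> \<le> norm ?A + norm ?B + norm ?C + norm ?E"
      by (rule triangle)
    also have "\<dots> \<le> L / 2 * (norm (h + k))\<^sup>2 * t + L / 2 * (norm h)\<^sup>2 * (2 * t)
        + L / 2 * (norm k)\<^sup>2 * (2 * t) + L / 2 * (norm (h - k))\<^sup>2 * t"
      using D[OF \<open>0 < t\<close>, of "h + k"] D[of "2 * t" h] D[of "2 * t" k] \<open>0 < t\<close>
        approx_affine_diff_quotient_midpoint[OF assms(1) \<open>0 < t\<close>]
      by (intro add_mono) auto
    also have "\<dots> = (L / 2 * ((norm (h + k))\<^sup>2 + (norm (h - k))\<^sup>2) + L * ((norm h)\<^sup>2 + (norm k)\<^sup>2)) * t"
      by (simp add: algebra_simps)
    finally show ?thesis .
  qed
  then have "D (h + k) - D h - D k = 0"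
    by (rule zero_if_norm_le_linear)
  then show ?thesis
    by (simp add: algebra_simps)
qed

lemma approx_affine_diff_quotient_limit_linear:
  assumes "approx_affine L f"
    and D: "\<And>h t. 0 < t \<Longrightarrow> norm (D h - diff_quotient f x h t) \<le> L / 2 * (norm h)\<^sup>2 * t"
  shows "linear D"
proof -
  have add: "D (h + k) = D h + D k" for h k
    using approx_affine_diff_quotient_limit_additive[OF assms] .
  have pos: "D (c *\<^sub>R h) = c *\<^sub>R D h" if "0 < c" for c h
    using diff_quotient_limit_pos_homogeneous[OF D that] .
  have zero: "D 0 = 0"
    using add[of 0 0] by simp
  have "D (c *\<^sub>R h) = c *\<^sub>R D h" for c h
  proof (cases c "0::real" rule: linorder_cases)
    case less
    have "D (c *\<^sub>R h) + D ((- c) *\<^sub>R h) = 0"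
      using add[of "c *\<^sub>R h" "(- c) *\<^sub>R h"] zero by (simp flip: scaleR_add_left)
    then show ?thesis
      using pos[of "- c" h] less by (simp add: add_eq_0_iff)
  qed (use zero pos in auto)
  then show "linear D"
    using add by (simp add: linear_iff)
qed

lemma bounded_linear_if_isCont_quadratic_approx:
  assumes "linear D" "isCont f x"
    and approx: "\<And>h. norm (f (x + h) - f x - D h) \<le> C * (norm h)\<^sup>2"
  shows "bounded_linear D"
proof -
  obtain \<delta> where \<delta>: "0 < \<delta>" "\<And>y. dist y x < \<delta> \<Longrightarrow> dist (f y) (f x) < 1"
    using assms(2) unfolding continuous_at_eps_delta by (metis zero_less_one)
  define K where "K = 2 / \<delta> * (1 + C * (\<delta> / 2)\<^sup>2)"
  have "norm (D h) \<le> norm h * K" for h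
  proof (cases "h = 0")
    case True
    then show ?thesis
      using linear_0[OF assms(1)] by simp
  next
    case False
    define u where "u = (\<delta> / (2 * norm h)) *\<^sub>R h"
    have norm_u: "norm u = \<delta> / 2"
      using False \<delta>(1) by (simp add: u_def)
    then have "norm (f (x + u) - f x) < 1"
      using \<delta> by (simp add: dist_norm)
    then have Du: "norm (D u) \<le> 1 + C * (\<delta> / 2)\<^sup>2"
      using norm_triangle_ineq4[of "f (x + u) - f x" "f (x + u) - f x - D u"] approx[of u] norm_u
      by simp
    have "D h = (2 * norm h / \<delta>) *\<^sub>R D u"
      using False \<delta>(1) by (simp add: u_def linear_scale[OF assms(1)])
    then have "norm (D h) = 2 * norm h / \<delta> * norm (D u)"
      using \<delta>(1) by simp
    also have "\<dots> \<le> 2 * norm h / \<delta> * (1 + C * (\<delta> / 2)\<^sup>2)"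
      using Du \<delta>(1) by (intro mult_left_mono) auto
    also have "\<dots> = norm h * K"
      by (simp add: K_def)
    finally show ?thesis .
  qed
  then show ?thesis
    using assms(1) by (intro bounded_linear_intro[of D]) (auto simp: linear_iff)
qed

lemma approx_affine_quadratic_approx:
  fixes f :: "'a::real_normed_vector \<Rightarrow> 'b::banach"
  assumes "approx_affine L f" "0 \<le> L" "isCont f x"
  obtains D where "bounded_linear D" "\<And>h. norm (f (x + h) - f x - D h) \<le> L / 2 * (norm h)\<^sup>2"
proof -
  obtain D where D: "\<And>h t. 0 < t \<Longrightarrow> norm (D h - diff_quotient f x h t) \<le> L / 2 * (norm h)\<^sup>2 * t"
    using approx_affine_diff_quotient_limits[OF assms(1,2)] by blast
  have approx: "norm (f (x + h) - f x - D h) \<le> L / 2 * (norm h)\<^sup>2" for h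
    using D[of 1 h] by (simp add: diff_quotient_def norm_minus_commute)
  have "linear D"
    using assms(1) D by (rule approx_affine_diff_quotient_limit_linear)
  then have "bounded_linear D"
    using assms(3) approx by (rule bounded_linear_if_isCont_quadratic_approx)
  then show thesis
    using approx by (rule that)
qed

lemma has_derivative_if_quadratic_approx:
  assumes "bounded_linear D"
    and approx: "\<And>h. norm (f (x + h) - f x - D h) \<le> C * (norm h)\<^sup>2"
  shows "(f has_derivative D) (at x)"
  unfolding has_derivative_at
proof (intro conjI assms(1))
  have "norm (norm (f (x + h) - f x - D h) / norm h) \<le> C * norm h" for h
  proof (cases "h = 0")
    case False
    then have "norm (f (x + h) - f x - D h) / norm h \<le> C * (norm h)\<^sup>2 / norm h"
      using approx[of h] by (intro divide_right_mono) auto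
    also have "\<dots> = C * norm h"
      by (simp add: power2_eq_square)
    finally show ?thesis
      by simp
  qed simp
  then have "\<forall>\<^sub>F h in at 0. norm (norm (f (x + h) - f x - D h) / norm h) \<le> C * norm h"
    by (intro always_eventually allI)
  moreover have "((\<lambda>h. C * norm h) \<longlongrightarrow> 0) (at 0)"
    by (auto intro!: tendsto_eq_intros)
  ultimately show "((\<lambda>h. norm (f (x + h) - f x - D h) / norm h) \<longlongrightarrow> 0) (at 0)"
    by (rule Lim_null_comparison)
qed

lemma minimising_sequence_Cauchy:
  fixes vs :: "nat \<Rightarrow> 'a::real_normed_vector"
  assumes close: "\<And>a b. (norm (a - b))\<^sup>2 \<le> 4 * ((Q a - m) + (Q b - m))"
    and vs: "(\<lambda>n. Q (vs n)) \<longlonglongrightarrow> m"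
  shows "Cauchy vs"
proof (rule metric_CauchyI)
  fix e :: real assume "0 < e"
  then obtain N where N: "\<And>n. N \<le> n \<Longrightarrow> \<bar>Q (vs n) - m\<bar> < e\<^sup>2 / 8"
    using LIMSEQ_D[OF vs, of "e\<^sup>2 / 8"] by auto
  have "dist (vs i) (vs j) < e" if "N \<le> i" "N \<le> j" for i j
  proof -
    have "(dist (vs i) (vs j))\<^sup>2 < e\<^sup>2"
      using close[of "vs i" "vs j"] N[OF that(1)] N[OF that(2)] unfolding dist_norm by argo
    then show ?thesis
      using \<open>0 < e\<close> by (simp add: power_less_imp_less_base)
  qed
  then show "\<exists>M. \<forall>i\<ge>M. \<forall>j\<ge>M. dist (vs i) (vs j) < e"
    by blast
qed

lemma minimising_sequence_exists:
  fixes Q :: "'a \<Rightarrow> real"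
  assumes "bdd_below (range Q)"
  obtains vs where "(\<lambda>n. Q (vs n)) \<longlonglongrightarrow> Inf (range Q)"
proof -
  have "Inf (range Q) \<in> closure (range Q)"
    using assms by (intro closure_contains_Inf) auto
  then obtain qs where qs: "\<forall>n. qs n \<in> range Q" "qs \<longlonglongrightarrow> Inf (range Q)"
    by (auto simp: closure_sequential)
  then have "\<forall>n. \<exists>w. qs n = Q w"
    by auto
  then obtain vs where "qs = (\<lambda>n. Q (vs n))"
    by metis
  with qs(2) show thesis
    by (intro that) simp
qed

lemma half_norm_squared_minus_bounded_linear_has_minimum:
  fixes D :: "'a::{real_inner,complete_space} \<Rightarrow> real"
  assumes "bounded_linear D"
  obtains v where "\<And>w. (norm v)\<^sup>2 / 2 - D v \<le> (norm w)\<^sup>2 / 2 - D w"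
proof -
  interpret D: bounded_linear D by (fact assms)
  obtain K where K: "\<And>h. \<bar>D h\<bar> \<le> norm h * K"
    using D.bounded by auto
  define Q where "Q w = (norm w)\<^sup>2 / 2 - D w" for w
  have "- K\<^sup>2 / 2 \<le> Q w" for w
  proof -
    have "D w \<le> norm w * K"
      using K[of w] by linarith
    moreover have "0 \<le> (norm w - K)\<^sup>2"
      by simp
    ultimately show ?thesis
      unfolding Q_def by (simp add: power2_eq_square algebra_simps)
  qed
  then have bdd: "bdd_below (range Q)"
    by (intro bdd_belowI2)
  define m where "m = Inf (range Q)"
  have m_le: "m \<le> Q w" for w
    unfolding m_def using bdd by (intro cInf_lower) auto
  obtain vs where vs: "(\<lambda>n. Q (vs n)) \<longlonglongrightarrow> m"
    unfolding m_def using bdd by (rule minimising_sequence_exists)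
  have "(norm (a - b))\<^sup>2 \<le> 4 * ((Q a - m) + (Q b - m))" for a b
  proof -
    have "(norm (a + b))\<^sup>2 + (norm (a - b))\<^sup>2 = 2 * (norm a)\<^sup>2 + 2 * (norm b)\<^sup>2"
      using dot_norm[of a b] dot_norm_neg[of a b] by argo
    moreover have "(norm ((1/2) *\<^sub>R (a + b)))\<^sup>2 = (norm (a + b))\<^sup>2 / 4"
      by (simp add: power_divide)
    moreover have "2 * D ((1/2) *\<^sub>R (a + b)) = D a + D b"
      by (simp add: D.scaleR D.add)
    ultimately show ?thesis
      using m_le[of "(1/2) *\<^sub>R (a + b)"] unfolding Q_def by argo
  qed
  then have "Cauchy vs"
    using vs by (rule minimising_sequence_Cauchy)
  then obtain v where "vs \<longlonglongrightarrow> v"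
    by (auto simp: Cauchy_convergent_iff convergent_def)
  then have "(\<lambda>n. Q (vs n)) \<longlonglongrightarrow> Q v"
    unfolding Q_def by (intro tendsto_intros D.tendsto) simp_all
  then have "Q v = m"
    using vs by (rule LIMSEQ_unique)
  then show thesis
    using m_le by (intro that[of v]) (simp add: Q_def)
qed

lemma riesz_representation:
  fixes D :: "'a::{real_inner,complete_space} \<Rightarrow> real"
  assumes "bounded_linear D"
  obtains v where "D = (\<lambda>h. v \<bullet> h)"
proof -
  obtain v where "\<And>w. (norm v)\<^sup>2 / 2 - D v \<le> (norm w)\<^sup>2 / 2 - D w"
    using half_norm_squared_minus_bounded_linear_has_minimum[OF assms] by blast
  moreover have "((\<lambda>w. (norm w)\<^sup>2 / 2 - D w) has_derivative (\<lambda>h. v \<bullet> h - D h)) (at v)"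
    unfolding power2_norm_eq_inner
    by (auto intro!: derivative_eq_intros bounded_linear.has_derivative[OF assms] simp: inner_commute)
  ultimately have "(\<lambda>h. v \<bullet> h - D h) = (\<lambda>h. 0)"
    by (intro differential_zero_maxmin[of v UNIV]) auto
  then have "D = (\<lambda>h. v \<bullet> h)"
    by (metis (no_types) eq_iff_diff_eq_0)
  then show thesis
    by (rule that)
qed

lemma approx_affine_gradient:
  fixes \<phi> :: "'a::{real_inner,complete_space} \<Rightarrow> real"
  assumes "approx_affine L \<phi>" "0 \<le> L" "continuous_on UNIV \<phi>"
  obtains g where "\<And>x h. \<bar>\<phi> (x + h) - \<phi> x - g x \<bullet> h\<bar> \<le> L / 2 * (norm h)\<^sup>2"
proof -
  have "\<exists>v. \<forall>h. \<bar>\<phi> (x + h) - \<phi> x - v \<bullet> h\<bar> \<le> L / 2 * (norm h)\<^sup>2" for x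
  proof -
    have "isCont \<phi> x"
      using assms(3) by (simp add: continuous_on_eq_continuous_at)
    with assms(1,2) obtain D
      where "bounded_linear D" "\<And>h. \<bar>\<phi> (x + h) - \<phi> x - D h\<bar> \<le> L / 2 * (norm h)\<^sup>2"
      by (metis approx_affine_quadratic_approx real_norm_def)
    moreover obtain v where "D = (\<lambda>h. v \<bullet> h)"
      using riesz_representation[OF \<open>bounded_linear D\<close>] .
    ultimately show ?thesis
      by auto
  qed
  then show thesis
    using that by metis
qed

lemma cocoercive_if_convex_smooth:
  fixes H :: "'a::real_inner \<Rightarrow> real"
  assumes convex: "\<And>x z. H x + G x \<bullet> (z - x) \<le> H z"
    and smooth: "\<And>y z. H z \<le> H y + G y \<bullet> (z - y) + M / 2 * (norm (z - y))\<^sup>2"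
    and "0 < M"
  shows "(norm (G y - G x))\<^sup>2 \<le> M * ((G y - G x) \<bullet> (y - x))"
proof -
  have bregman: "(norm (G y - G x))\<^sup>2 \<le> 2 * M * (H y - H x - G x \<bullet> (y - x))" for x y
  proof -
    define \<Gamma> where "\<Gamma> = G y - G x"
    define z where "z = y - (1 / M) *\<^sub>R \<Gamma>"
    have "H x + G x \<bullet> (y - x) - G x \<bullet> \<Gamma> / M \<le> H z"
      using convex[where x = x and z = z] by (simp add: z_def inner_diff_right algebra_simps)
    moreover have "H z \<le> H y - G y \<bullet> \<Gamma> / M + (norm \<Gamma>)\<^sup>2 / (2 * M)"
      using smooth[where y = y and z = z] \<open>0 < M\<close> by (simp add: z_def power_mult_distrib power2_eq_square)
    moreover have "G y \<bullet> \<Gamma> / M = G x \<bullet> \<Gamma> / M + (norm \<Gamma>)\<^sup>2 / M"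
      by (simp add: \<Gamma>_def power2_norm_eq_inner inner_diff_left diff_divide_distrib)
    moreover have "(norm \<Gamma>)\<^sup>2 / M = (norm \<Gamma>)\<^sup>2 / (2 * M) + (norm \<Gamma>)\<^sup>2 / (2 * M)"
      by simp
    ultimately have "(norm \<Gamma>)\<^sup>2 / (2 * M) \<le> H y - H x - G x \<bullet> (y - x)"
      by linarith
    then show ?thesis
      using \<open>0 < M\<close> by (simp add: \<Gamma>_def pos_divide_le_eq mult_ac)
  qed
  have "G x \<bullet> (y - x) + G y \<bullet> (x - y) = - ((G y - G x) \<bullet> (y - x))"
    by (simp add: inner_diff_left inner_diff_right algebra_simps)
  then show ?thesis
    using bregman[of x y] bregman[of y x] by (simp add: norm_minus_commute algebra_simps)
qed

lemma norm_le_if_shifted_cocoercive: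
  fixes a d :: "'a::real_inner"
  assumes "(norm (a + L *\<^sub>R d))\<^sup>2 \<le> 2 * L * ((a + L *\<^sub>R d) \<bullet> d)" "0 \<le> L"
  shows "norm a \<le> L * norm d"
proof -
  have "(a + L *\<^sub>R d) \<bullet> d = a \<bullet> d + L * (norm d)\<^sup>2"
    unfolding power2_norm_eq_inner by (simp add: inner_add_left)
  moreover have "(norm (a + L *\<^sub>R d))\<^sup>2 = (norm a)\<^sup>2 + 2 * L * (a \<bullet> d) + L\<^sup>2 * (norm d)\<^sup>2"
  proof -
    have "(a + L *\<^sub>R d) \<bullet> (a + L *\<^sub>R d) = a \<bullet> a + L * (a \<bullet> d) + L * (d \<bullet> a) + L * (L * (d \<bullet> d))"
      by (simp add: inner_add_left inner_add_right distrib_left)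
    then show ?thesis
      unfolding power2_norm_eq_inner by (simp add: inner_commute power2_eq_square algebra_simps)
  qed
  ultimately have "(norm a)\<^sup>2 + 2 * L * (a \<bullet> d) + L\<^sup>2 * (norm d)\<^sup>2 \<le> 2 * L * (a \<bullet> d + L * (norm d)\<^sup>2)"
    using assms(1) by simp
  then have "(norm a)\<^sup>2 \<le> (L * norm d)\<^sup>2"
    by (simp add: power_mult_distrib power2_eq_square algebra_simps)
  then show ?thesis
    by (rule power2_le_imp_le) (use assms(2) in simp)
qed

lemma gradient_lipschitz_if_quadratic_approx:
  fixes \<phi> :: "'a::real_inner \<Rightarrow> real"
  assumes approx: "\<And>x h. \<bar>\<phi> (x + h) - \<phi> x - g x \<bullet> h\<bar> \<le> L / 2 * (norm h)\<^sup>2"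
    and "0 < L"
  shows "L-lipschitz_on UNIV g"
proof (rule lipschitz_onI)
  fix x y :: 'a
  define H where "H z = \<phi> z + L / 2 * (norm z)\<^sup>2" for z
  define G where "G z = g z + L *\<^sub>R z" for z
  have H_G: "H z - H x - G x \<bullet> (z - x) = \<phi> z - \<phi> x - g x \<bullet> (z - x) + L / 2 * (norm (z - x))\<^sup>2"
    for x z
    unfolding H_def G_def power2_norm_eq_inner
    by (simp add: inner_add_left inner_diff_left inner_diff_right inner_commute algebra_simps)
  have convex: "H x + G x \<bullet> (z - x) \<le> H z"
    and smooth: "H z \<le> H x + G x \<bullet> (z - x) + 2 * L / 2 * (norm (z - x))\<^sup>2" for x z
  proof -
    have bound: "\<bar>\<phi> z - \<phi> x - g x \<bullet> (z - x)\<bar> \<le> L / 2 * (norm (z - x))\<^sup>2"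
      using approx[of x "z - x"] by simp
    show "H x + G x \<bullet> (z - x) \<le> H z" "H z \<le> H x + G x \<bullet> (z - x) + 2 * L / 2 * (norm (z - x))\<^sup>2"
      using H_G[where x = x and z = z] abs_le_D1[OF bound] abs_le_D2[OF bound] by linarith+
  qed
  have cocoercive: "(norm (G y - G x))\<^sup>2 \<le> 2 * L * ((G y - G x) \<bullet> (y - x))"
    by (rule cocoercive_if_convex_smooth[OF convex smooth]) (use \<open>0 < L\<close> in simp)
  have "G y - G x = (g y - g x) + L *\<^sub>R (y - x)"
    by (simp add: G_def algebra_simps)
  with cocoercive have "norm (g y - g x) \<le> L * norm (y - x)"
    using \<open>0 < L\<close> by (intro norm_le_if_shifted_cocoercive) auto
  then show "dist (g x) (g y) \<le> L * dist x y"
    by (simp add: dist_norm norm_minus_commute)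
qed (use \<open>0 < L\<close> in simp)

theorem lemma2p2:
  fixes F :: "'a::{real_inner, complete_space} \<Rightarrow> 'b::banach"
    and L :: real
  assumes contF: "continuous_on UNIV F"
    and Lpos: "L > 0"
    and approx: "\<And>(n::nat) (x::nat \<Rightarrow> 'a) (lam::nat \<Rightarrow> real).
        n \<ge> 1 \<Longrightarrow> (\<forall>i\<in>{1..n}. lam i \<ge> 0) \<Longrightarrow> (\<Sum>i=1..n. lam i) = 1 \<Longrightarrow>
        norm (F (\<Sum>i=1..n. lam i *\<^sub>R x i) - (\<Sum>i=1..n. lam i *\<^sub>R F (x i)))
          \<le> L / 2 * (\<Sum>i=1..n. \<Sum>j\<in>{i<..n}. lam i * lam j * (norm (x i - x j))\<^sup>2)"
  shows "\<forall>ystar :: 'b \<Rightarrow>\<^sub>L real. norm ystar \<le> 1 \<longrightarrow>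
    (\<exists>grad :: 'a \<Rightarrow> 'a.
       (\<forall>x. ((\<lambda>z. blinfun_apply ystar (F z)) has_derivative (\<lambda>h. grad x \<bullet> h)) (at x))
       \<and> L-lipschitz_on UNIV grad)"
proof (intro allI impI)
  fix ystar :: "'b \<Rightarrow>\<^sub>L real" assume "norm ystar \<le> 1"
  let ?\<phi> = "\<lambda>z. ystar (F z)"
  have "approx_affine L ?\<phi>"
    using approx_affine_if_convex_combination_bound[OF approx] \<open>norm ystar \<le> 1\<close>
    by (rule approx_affine_blinfun_compose)
  moreover have "continuous_on UNIV ?\<phi>"
    using contF by (intro continuous_intros)
  ultimately obtain grad where grad: "\<And>x h. \<bar>?\<phi> (x + h) - ?\<phi> x - grad x \<bullet> h\<bar> \<le> L / 2 * (norm h)\<^sup>2"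
    using Lpos by (metis approx_affine_gradient less_imp_le)
  have "(?\<phi> has_derivative (\<lambda>h. grad x \<bullet> h)) (at x)" for x
    by (rule has_derivative_if_quadratic_approx[OF bounded_linear_inner_right, where C = "L / 2"])
      (use grad in simp)
  moreover have "L-lipschitz_on UNIV grad"
    using grad Lpos by (rule gradient_lipschitz_if_quadratic_approx)
  ultimately show "\<exists>grad. (\<forall>x. (?\<phi> has_derivative (\<lambda>h. grad x \<bullet> h)) (at x)) \<and> L-lipschitz_on UNIV grad"
    by blast
qed

end
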